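(* Let $\mathcal{X},\mathcal{Y}_1,\mathcal{Y}_2$ be finite sets and consider the binary hypothesis testing system described in the context, with null pmf $P_{XY_1Y_2}$ and alternative pmf $\bar P_{XY_1Y_2}$, where $\bar P_{XY_1Y_2}(x,y_1,y_2)>0$ for all $(x,y_1,y_2)$. If $R_1\ge H(X)$ and $R_2\ge H(Y_1|X)$ (entropies computed under $P_{XY_1Y_2}$), then for every $\epsilon_1,\epsilon_2\in(0,1)$ the region $\mathcal{E}(R_1,R_2,\epsilon_1,\epsilon_2)$ equals the set of all nonnegative pairs $(\theta_1,\theta_2)$ with \[\theta_1\le D(P_{XY_1}\|\bar P_{XY_1}),\qquad \theta_2\le D(P_{XY_1Y_2}\|\bar P_{XY_1Y_2}).\]
   Context: Setting: Under hypothesis $\mathcal{H}=1$ (null) the triples $(X_t,Y_{1,t},Y_{2,t})$, $t=1,\dots,n$, are i.i.d. $\sim P_{XY_1Y_2}$; under $\mathcal{H}=2$ (alternative) i.i.d. $\sim \bar P_{XY_1Y_2}$. $P_{XY_1}$, $\bar P_{XY_1}$ denote marginals. A code of blocklength $n$: encoder $\phi_{1,n}:\mathcal{X}^n\to\{1,\dots,\|\phi_{1,n}\|\}$, $M_1=\phi_{1,n}(X^n)$ sent to both detectors; Detector 1 (observing $Y_1^n$) computes $M_2=\phi_{2,n}(M_1,Y_1^n)\in\{1,\dots,\|\phi_{2,n}\|\}$, sent to Detector 2, and decides $\hat{\mathcal H}_1=\psi_{1,n}(M_1,Y_1^n)\in\{1,2\}$; Detector 2 (observing $Y_2^n$) decides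 $\hat{\mathcal H}_2=\psi_{2,n}(M_1,M_2,Y_2^n)\in\{1,2\}$. Let $\alpha_{k,n}=\Pr[\hat{\mathcal H}_k\neq 1\mid\mathcal H=1]$, $\beta_{k,n}=\Pr[\hat{\mathcal H}_k\neq 2\mid\mathcal H=2]$. $(\theta_1,\theta_2)$ is achievable for $(R_1,R_2,\epsilon_1,\epsilon_2)$ if there are codes for all $n$ with $\limsup_n\alpha_{k,n}\le\epsilon_k$, $\theta_k\le\liminf_n-\frac1n\log\beta_{k,n}$, $\limsup_n\frac1n\log\|\phi_{k,n}\|\le R_k$, $k=1,2$. $\mathcal{E}(R_1,R_2,\epsilon_1,\epsilon_2)$ is the closure of the set of achievable pairs. *)

theory Defs
  imports "HOL-Analysis.Analysis"
begin

definition is_pmf :: "('a::finite \<Rightarrow> real) \<Rightarrow> bool" where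
  "is_pmf P \<longleftrightarrow> (\<forall>a. 0 \<le> P a) \<and> (\<Sum>a\<in>UNIV. P a) = 1"

definition marg_X :: "('x::finite \<times> 'y1::finite \<times> 'y2::finite \<Rightarrow> real) \<Rightarrow> 'x \<Rightarrow> real" where
  "marg_X P x = (\<Sum>y1\<in>UNIV. \<Sum>y2\<in>UNIV. P (x, y1, y2))"

definition marg_XY1 :: "('x::finite \<times> 'y1::finite \<times> 'y2::finite \<Rightarrow> real) \<Rightarrow> 'x \<times> 'y1 \<Rightarrow> real" where
  "marg_XY1 P = (\<lambda>(x, y1). \<Sum>y2\<in>UNIV. P (x, y1, y2))"

definition entropy_pmf :: "('a::finite \<Rightarrow> real) \<Rightarrow> real" where
  "entropy_pmf p = - (\<Sum>a\<in>UNIV. if p a = 0 then 0 else p a * ln (p a))"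

definition cond_entropy_Y1_X :: "('x::finite \<times> 'y1::finite \<times> 'y2::finite \<Rightarrow> real) \<Rightarrow> real" where
  "cond_entropy_Y1_X P =
     - (\<Sum>x\<in>UNIV. \<Sum>y1\<in>UNIV.
          if marg_XY1 P (x, y1) = 0 then 0
          else marg_XY1 P (x, y1) * ln (marg_XY1 P (x, y1) / marg_X P x))"

text \<open>Relative entropy D(p||q) (used only when q is positive everywhere).\<close>
definition kl_div :: "('a::finite \<Rightarrow> real) \<Rightarrow> ('a \<Rightarrow> real) \<Rightarrow> real" where
  "kl_div p q = (\<Sum>a\<in>UNIV. if p a = 0 then 0 else p a * ln (p a / q a))"

definition seq_prob :: "('a::finite \<Rightarrow> real) \<Rightarrow> nat \<Rightarrow> ('a list \<Rightarrow> bool) \<Rightarrow> real" where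
  "seq_prob P n E = (\<Sum>s\<in>{s. length s = n \<and> E s}. prod_list (map P s))"

definition xs_of :: "('x \<times> 'y1 \<times> 'y2) list \<Rightarrow> 'x list" where
  "xs_of s = map fst s"
definition y1s_of :: "('x \<times> 'y1 \<times> 'y2) list \<Rightarrow> 'y1 list" where
  "y1s_of s = map (fst \<circ> snd) s"
definition y2s_of :: "('x \<times> 'y1 \<times> 'y2) list \<Rightarrow> 'y2 list" where
  "y2s_of s = map (snd \<circ> snd) s"

text \<open>A sequence of codes (one per blocklength n): message-set sizes N1 n, N2 n,
  encoder phi1 n, Detector-1 relay phi2 n, decisions psi1 n, psi2 n in {1,2}.\<close>
definition valid_codes ::
  "(nat \<Rightarrow> nat) \<Rightarrow> (nat \<Rightarrow> nat) \<Rightarrow> (nat \<Rightarrow> 'x list \<Rightarrow> nat) \<Rightarrow> (nat \<Rightarrow> nat \<Rightarrow> 'y1 list \<Rightarrow> nat)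
   \<Rightarrow> (nat \<Rightarrow> nat \<Rightarrow> 'y1 list \<Rightarrow> nat) \<Rightarrow> (nat \<Rightarrow> nat \<Rightarrow> nat \<Rightarrow> 'y2 list \<Rightarrow> nat) \<Rightarrow> bool" where
  "valid_codes N1 N2 phi1 phi2 psi1 psi2 \<longleftrightarrow>
     (\<forall>n. (\<forall>xs. length xs = n \<longrightarrow> phi1 n xs \<in> {1..N1 n})
        \<and> (\<forall>m ys. m \<in> {1..N1 n} \<and> length ys = n \<longrightarrow> phi2 n m ys \<in> {1..N2 n})
        \<and> (\<forall>m ys. m \<in> {1..N1 n} \<and> length ys = n \<longrightarrow> psi1 n m ys \<in> {1, 2})
        \<and> (\<forall>m1 m2 zs. m1 \<in> {1..N1 n} \<and> m2 \<in> {1..N2 n} \<and> length zs = n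
                \<longrightarrow> psi2 n m1 m2 zs \<in> {1, 2}))"

definition dec1 where
  "dec1 phi1 psi1 n s = psi1 n (phi1 n (xs_of s)) (y1s_of s)"
definition dec2 where
  "dec2 phi1 phi2 psi2 n s =
     psi2 n (phi1 n (xs_of s)) (phi2 n (phi1 n (xs_of s)) (y1s_of s)) (y2s_of s)"

definition err_exp :: "nat \<Rightarrow> real \<Rightarrow> ereal" where
  "err_exp n b = (if b = 0 then \<infinity> else ereal (- ln b / real n))"

definition achievable ::
  "('x::finite \<times> 'y1::finite \<times> 'y2::finite \<Rightarrow> real) \<Rightarrow> ('x \<times> 'y1 \<times> 'y2 \<Rightarrow> real)
   \<Rightarrow> real \<Rightarrow> real \<Rightarrow> real \<Rightarrow> real \<Rightarrow> real \<Rightarrow> real \<Rightarrow> bool" where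
  "achievable P Pbar R1 R2 eps1 eps2 th1 th2 \<longleftrightarrow>
     0 \<le> th1 \<and> 0 \<le> th2 \<and>
     (\<exists>N1 N2 phi1 phi2 psi1 psi2.
        valid_codes N1 N2 phi1 phi2 psi1 psi2
      \<and> limsup (\<lambda>n. ereal (seq_prob P n (\<lambda>s. dec1 phi1 psi1 n s \<noteq> 1))) \<le> ereal eps1
      \<and> limsup (\<lambda>n. ereal (seq_prob P n (\<lambda>s. dec2 phi1 phi2 psi2 n s \<noteq> 1))) \<le> ereal eps2
      \<and> ereal th1 \<le> liminf (\<lambda>n. err_exp n (seq_prob Pbar n (\<lambda>s. dec1 phi1 psi1 n s \<noteq> 2)))
      \<and> ereal th2 \<le> liminf (\<lambda>n. err_exp n (seq_prob Pbar n (\<lambda>s. dec2 phi1 phi2 psi2 n s \<noteq> 2)))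
      \<and> limsup (\<lambda>n. ereal (ln (real (N1 n)) / real n)) \<le> ereal R1
      \<and> limsup (\<lambda>n. ereal (ln (real (N2 n)) / real n)) \<le> ereal R2)"

definition exponent_region ::
  "('x::finite \<times> 'y1::finite \<times> 'y2::finite \<Rightarrow> real) \<Rightarrow> ('x \<times> 'y1 \<times> 'y2 \<Rightarrow> real)
   \<Rightarrow> real \<Rightarrow> real \<Rightarrow> real \<Rightarrow> real \<Rightarrow> (real \<times> real) set" where
  "exponent_region P Pbar R1 R2 eps1 eps2 =
     closure {(th1, th2). achievable P Pbar R1 R2 eps1 eps2 th1 th2}"

end

theory Submission
  imports Defs "HOL-Real_Asymp.Real_Asymp"
begin

text \<open>
  Achievability: the encoder sends the index of \<open>X\<^sup>n\<close> among the sequences of probability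
  at least \<open>exp (- n H(X) - n\<^bsup>3/4\<^esup>)\<close>, and Detector 1 forwards the index of \<open>Y\<^sub>1\<^sup>n\<close>
  among the sequences of conditional probability at least \<open>exp (- n H(Y\<^sub>1|X) - n\<^bsup>3/4\<^esup>)\<close>
  given \<open>X\<^sup>n\<close>. By Chebyshev's inequality these sets capture the source with probability
  tending to one, and a counting argument bounds their sizes so that the rates fit into
  \<open>R\<^sub>1\<close> and \<open>R\<^sub>2\<close>. Knowing \<open>(X\<^sup>n, Y\<^sub>1\<^sup>n)\<close>, resp. \<open>(X\<^sup>n, Y\<^sub>1\<^sup>n, Y\<^sub>2\<^sup>n)\<close>, up to a vanishing
  error, each detector runs Stein's log-likelihood-ratio test against the corresponding
  marginal of \<open>Pbar\<close>, which reaches the divergence up to any \<open>\<delta> > 0\<close>.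

  Converse: the decision of Detector 1 is a function of \<open>(X\<^sup>n, Y\<^sub>1\<^sup>n)\<close> and that of Detector 2
  of the whole triple sequence, so each is a test between two i.i.d. laws, and the strong
  converse of Stein's lemma bounds its exponent by the divergence as soon as the type-I
  error stays below some \<open>\<epsilon> < 1\<close>.
\<close>

section \<open>Expectations over i.i.d. sequences\<close>

lemma finite_lists_length: "finite {s::'a::finite list. length s = n}"
  using finite_lists_length_eq[of "UNIV::'a set" n] by simp

lemma sum_lists_length_Suc:
  "(\<Sum>s | length s = Suc n. F s) = (\<Sum>a\<in>UNIV. \<Sum>s | length s = n. F (a # s))"
  for F :: "'a::finite list \<Rightarrow> 'b::comm_monoid_add"
proof -
  have split: "{s::'a list. length s = Suc n} = (\<lambda>(a, s). a # s) ` (UNIV \<times> {s. length s = n})"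
    by (auto simp: length_Suc_conv image_iff)
  have inj: "inj_on (\<lambda>(a, s). a # s) (UNIV \<times> {s::'a list. length s = n})"
    by (auto simp: inj_on_def)
  show ?thesis
    unfolding split sum.reindex[OF inj] sum.cartesian_product by (simp add: case_prod_beta)
qed

definition seq_expect :: "('a::finite \<Rightarrow> real) \<Rightarrow> nat \<Rightarrow> ('a list \<Rightarrow> real) \<Rightarrow> real" where
  "seq_expect P n g = (\<Sum>s | length s = n. prod_list (map P s) * g s)"

lemma seq_expect_0: "seq_expect P 0 g = g []"
  unfolding seq_expect_def by simp

lemma seq_expect_Suc: "seq_expect P (Suc n) g = (\<Sum>a\<in>UNIV. P a * seq_expect P n (\<lambda>s. g (a # s)))"
  unfolding seq_expect_def by (simp add: sum_lists_length_Suc sum_distrib_left mult.assoc)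

lemma seq_expect_add: "seq_expect P n (\<lambda>s. f s + g s) = seq_expect P n f + seq_expect P n g"
  unfolding seq_expect_def by (simp add: distrib_left sum.distrib)

lemma seq_expect_cmult: "seq_expect P n (\<lambda>s. c * f s) = c * seq_expect P n f"
  unfolding seq_expect_def by (simp add: sum_distrib_left algebra_simps)

lemma sum_weighted_add_const:
  "(\<Sum>a\<in>A. P a * (h a + k)) = (\<Sum>a\<in>A. P a * h a) + k * (\<Sum>a\<in>A. P a)" for k :: real
  by (simp add: distrib_left sum.distrib sum_distrib_left mult.commute)

lemma seq_expect_const:
  assumes "is_pmf P" shows "seq_expect P n (\<lambda>_. c) = c"
proof (induction n)
  case (Suc n)
  then show ?case
    using assms by (simp add: seq_expect_Suc is_pmf_def sum_distrib_right[symmetric])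
qed (simp add: seq_expect_0)

lemma prod_list_nonneg: "\<forall>a. 0 \<le> P a \<Longrightarrow> 0 \<le> prod_list (map P s)" for P :: "'a \<Rightarrow> real"
  by (induction s) auto

lemma seq_expect_mono:
  assumes "\<forall>a. 0 \<le> P a"
    and "\<And>s. length s = n \<Longrightarrow> \<forall>a\<in>set s. P a \<noteq> 0 \<Longrightarrow> f s \<le> g s"
  shows "seq_expect P n f \<le> seq_expect P n g"
  unfolding seq_expect_def
proof (rule sum_mono)
  fix s :: "'a list" assume s: "s \<in> {s. length s = n}"
  show "prod_list (map P s) * f s \<le> prod_list (map P s) * g s"
  proof (cases "\<forall>a\<in>set s. P a \<noteq> 0")
    case True
    then show ?thesis
      using assms s prod_list_nonneg[of P s] by (simp add: mult_left_mono)
  next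
    case False
    then have "prod_list (map P s) = 0" by (auto simp: prod_list_zero_iff)
    then show ?thesis by simp
  qed
qed

lemma seq_expect_sum_list:
  assumes "is_pmf P"
  shows "seq_expect P n (\<lambda>s. sum_list (map h s)) = real n * (\<Sum>a\<in>UNIV. P a * h a)"
proof (induction n)
  case (Suc n)
  have "seq_expect P (Suc n) (\<lambda>s. sum_list (map h s))
      = (\<Sum>a\<in>UNIV. P a * (h a + real n * (\<Sum>a\<in>UNIV. P a * h a)))"
    by (simp add: seq_expect_Suc seq_expect_add seq_expect_const[OF assms] Suc)
  also have "\<dots> = real (Suc n) * (\<Sum>a\<in>UNIV. P a * h a)"
    using assms by (simp only: sum_weighted_add_const) (simp add: is_pmf_def algebra_simps)
  finally show ?case .
qed (simp add: seq_expect_0)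

lemma seq_expect_sum_list_square:
  assumes "is_pmf P" and centered: "(\<Sum>a\<in>UNIV. P a * h a) = 0"
  shows "seq_expect P n (\<lambda>s. (sum_list (map h s))\<^sup>2) = real n * (\<Sum>a\<in>UNIV. P a * (h a)\<^sup>2)"
proof (induction n)
  case (Suc n)
  have square: "(sum_list (map h (a # s)))\<^sup>2
      = (h a)\<^sup>2 + (2 * h a) * sum_list (map h s) + (sum_list (map h s))\<^sup>2" for a s
    by (simp add: power2_eq_square algebra_simps)
  have "seq_expect P (Suc n) (\<lambda>s. (sum_list (map h s))\<^sup>2)
      = (\<Sum>a\<in>UNIV. P a * ((h a)\<^sup>2 + real n * (\<Sum>a\<in>UNIV. P a * (h a)\<^sup>2)))"
        by (simp only: seq_expect_Suc square seq_expect_add seq_expect_cmult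
        seq_expect_const[OF assms(1)]
        Suc seq_expect_sum_list[OF assms(1)] centered) simp
  also have "\<dots> = real (Suc n) * (\<Sum>a\<in>UNIV. P a * (h a)\<^sup>2)"
    using assms by (simp only: sum_weighted_add_const) (simp add: is_pmf_def algebra_simps)
  finally show ?case .
qed (simp add: seq_expect_0)

definition push_pmf :: "('a \<Rightarrow> 'b) \<Rightarrow> ('a::finite \<Rightarrow> real) \<Rightarrow> 'b \<Rightarrow> real" where
  "push_pmf g P b = (\<Sum>a | g a = b. P a)"

lemma is_pmf_push_pmf:
  assumes "is_pmf P" shows "is_pmf (push_pmf g P :: 'b::finite \<Rightarrow> real)"
proof -
  have "(\<Sum>b\<in>UNIV. push_pmf g P b) = (\<Sum>a\<in>UNIV. P a)"
    unfolding push_pmf_def using sum.group[of UNIV UNIV g P] by simp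
  then show ?thesis
    using assms unfolding is_pmf_def push_pmf_def by (auto intro: sum_nonneg)
qed

lemma seq_expect_push_pmf:
  "seq_expect P n (\<lambda>s. F (map g s)) = seq_expect (push_pmf g P) n F"
  for g :: "'a::finite \<Rightarrow> 'b::finite"
proof (induction n arbitrary: F)
  case (Suc n)
  define G where "G b = seq_expect (push_pmf g P) n (\<lambda>u. F (b # u))" for b
  have "seq_expect P (Suc n) (\<lambda>s. F (map g s)) = (\<Sum>a\<in>UNIV. P a * G (g a))"
    unfolding seq_expect_Suc G_def by (simp add: Suc[symmetric])
  also have "\<dots> = (\<Sum>b\<in>UNIV. \<Sum>a | a \<in> UNIV \<and> g a = b. P a * G (g a))"
    by (rule sum.group[symmetric]) auto
  also have "\<dots> = seq_expect (push_pmf g P) (Suc n) F"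
    by (simp add: seq_expect_Suc G_def push_pmf_def sum_distrib_right)
  finally show ?case .
qed (simp add: seq_expect_0)

lemma seq_prob_eq_seq_expect: "seq_prob P n E = seq_expect P n (\<lambda>s. if E s then 1 else 0)"
  unfolding seq_prob_def seq_expect_def
  by (simp add: sum.inter_filter[OF finite_lists_length, symmetric] if_distrib Collect_conj_eq
      cong: if_cong)

lemma seq_prob_nonneg: "\<forall>a. 0 \<le> P a \<Longrightarrow> 0 \<le> seq_prob P n E"
  unfolding seq_prob_def by (rule sum_nonneg) (simp add: prod_list_nonneg)

lemma seq_prob_mono:
  assumes "\<forall>a. 0 \<le> P a"
    and "\<And>s. length s = n \<Longrightarrow> \<forall>a\<in>set s. P a \<noteq> 0 \<Longrightarrow> E s \<Longrightarrow> F s"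
  shows "seq_prob P n E \<le> seq_prob P n F"
  unfolding seq_prob_eq_seq_expect by (rule seq_expect_mono[OF assms(1)]) (use assms(2) in auto)

lemma seq_prob_cong:
  "(\<And>s. length s = n \<Longrightarrow> E s = F s) \<Longrightarrow> seq_prob P n E = seq_prob P n F"
  unfolding seq_prob_def by (rule sum.cong) auto

lemma seq_prob_disj_le:
  assumes "\<forall>a. 0 \<le> P a"
  shows "seq_prob P n (\<lambda>s. E s \<or> F s) \<le> seq_prob P n E + seq_prob P n F"
proof -
  have "seq_prob P n (\<lambda>s. E s \<or> F s)
      \<le> seq_expect P n (\<lambda>s. (if E s then 1 else 0) + (if F s then 1 else 0))"
    unfolding seq_prob_eq_seq_expect by (rule seq_expect_mono[OF assms]) auto
  then show ?thesis by (simp add: seq_expect_add seq_prob_eq_seq_expect)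
qed

lemma seq_prob_not:
  assumes "is_pmf P"
  shows "seq_prob P n (\<lambda>s. \<not> E s) = 1 - seq_prob P n E"
proof -
  have "seq_prob P n (\<lambda>s. \<not> E s) + seq_prob P n E = seq_expect P n (\<lambda>_. 1)"
    unfolding seq_prob_eq_seq_expect seq_expect_add[symmetric]
    by (rule arg_cong[where f = "seq_expect P n"]) auto
  then show ?thesis
    using seq_expect_const[OF assms] by simp
qed

lemma seq_prob_le_1:
  assumes "is_pmf P" shows "seq_prob P n E \<le> 1"
  using seq_prob_not[OF assms, of n E] seq_prob_nonneg[of P n "\<lambda>s. \<not> E s"] assms
  unfolding is_pmf_def by simp

lemma seq_prob_tendsto_0_if_disj:
  assumes "\<forall>a. 0 \<le> P a" and "\<And>n s. length s = n \<Longrightarrow> E n s \<Longrightarrow> F n s \<or> G n s"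
    and "(\<lambda>n. seq_prob P n (F n)) \<longlonglongrightarrow> 0" and "(\<lambda>n. seq_prob P n (G n)) \<longlonglongrightarrow> 0"
  shows "(\<lambda>n. seq_prob P n (E n)) \<longlonglongrightarrow> 0"
proof (rule Lim_null_comparison[OF always_eventually tendsto_add_zero[OF assms(3,4)]], intro allI)
  fix n
  have "seq_prob P n (E n) \<le> seq_prob P n (\<lambda>s. F n s \<or> G n s)"
    using assms(1,2) by (rule seq_prob_mono)
  also have "\<dots> \<le> seq_prob P n (F n) + seq_prob P n (G n)"
    by (rule seq_prob_disj_le[OF assms(1)])
  finally show "norm (seq_prob P n (E n)) \<le> seq_prob P n (F n) + seq_prob P n (G n)"
    using seq_prob_nonneg[OF assms(1)] by simp
qed

lemma seq_prob_push_pmf: "seq_prob P n (\<lambda>s. E (map g s)) = seq_prob (push_pmf g P) n E"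
  for g :: "'a::finite \<Rightarrow> 'b::finite"
  unfolding seq_prob_eq_seq_expect by (rule seq_expect_push_pmf)

lemma sum_list_map_diff_const:
  "sum_list (map (\<lambda>a. f a - c) s) = sum_list (map f s) - real (length s) * c"
  by (induction s) (auto simp: algebra_simps)

lemma seq_prob_deviation_le:
  assumes P: "is_pmf P" and "0 < d"
  shows "seq_prob P n (\<lambda>s. d \<le> \<bar>sum_list (map f s) - real n * (\<Sum>a\<in>UNIV. P a * f a)\<bar>)
         \<le> real n * (\<Sum>a\<in>UNIV. P a * (f a - (\<Sum>b\<in>UNIV. P b * f b))\<^sup>2) / d\<^sup>2"
proof -
  define \<mu> where "\<mu> = (\<Sum>a\<in>UNIV. P a * f a)"
  define h where "h a = f a - \<mu>" for a
  have centered: "(\<Sum>a\<in>UNIV. P a * h a) = 0"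
    using P sum_weighted_add_const[of P f "- \<mu>" UNIV] unfolding h_def \<mu>_def is_pmf_def by simp
  have "seq_prob P n (\<lambda>s. d \<le> \<bar>sum_list (map f s) - real n * \<mu>\<bar>)
      \<le> seq_expect P n (\<lambda>s. (1 / d\<^sup>2) * (sum_list (map h s))\<^sup>2)"
    unfolding seq_prob_eq_seq_expect
  proof (rule seq_expect_mono)
    fix s :: "'a list" assume "length s = n"
    then have "sum_list (map h s) = sum_list (map f s) - real n * \<mu>"
      unfolding h_def by (simp add: sum_list_map_diff_const)
    then show "(if d \<le> \<bar>sum_list (map f s) - real n * \<mu>\<bar> then 1 else 0)
        \<le> 1 / d\<^sup>2 * (sum_list (map h s))\<^sup>2"
      using \<open>0 < d\<close> by (auto simp: field_simps abs_le_square_iff[symmetric])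
  qed (use P in \<open>simp add: is_pmf_def\<close>)
  also have "\<dots> = real n * (\<Sum>a\<in>UNIV. P a * (h a)\<^sup>2) / d\<^sup>2"
    by (simp only: seq_expect_cmult seq_expect_sum_list_square[OF P centered]) simp
  finally show ?thesis unfolding h_def \<mu>_def .
qed

lemma seq_prob_deviation_tendsto_0:
  assumes P: "is_pmf P"
    and d: "\<forall>\<^sub>F n in sequentially. 0 < d n" "(\<lambda>n. real n / (d n)\<^sup>2) \<longlonglongrightarrow> 0"
  shows "(\<lambda>n. seq_prob P n (\<lambda>s. d n \<le> \<bar>sum_list (map f s) - real n * (\<Sum>a\<in>UNIV. P a * f a)\<bar>))
           \<longlonglongrightarrow> 0"
proof (rule Lim_null_comparison)
  define V where "V = (\<Sum>a\<in>UNIV. P a * (f a - (\<Sum>b\<in>UNIV. P b * f b))\<^sup>2)"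
  show "(\<lambda>n. V * (real n / (d n)\<^sup>2)) \<longlonglongrightarrow> 0"
    using tendsto_mult_right_zero[OF d(2)] by simp
  show "\<forall>\<^sub>F n in sequentially.
      norm (seq_prob P n (\<lambda>s. d n \<le> \<bar>sum_list (map f s) - real n * (\<Sum>a\<in>UNIV. P a * f a)\<bar>))
      \<le> V * (real n / (d n)\<^sup>2)"
    using d(1)
  proof eventually_elim
    case (elim n)
    then show ?case
      using seq_prob_deviation_le[OF P elim, of n f] seq_prob_nonneg[of P] P
      unfolding V_def is_pmf_def by (simp add: mult.commute)
  qed
qed

section \<open>Stein's lemma\<close>

definition llr :: "('a \<Rightarrow> real) \<Rightarrow> ('a \<Rightarrow> real) \<Rightarrow> 'a list \<Rightarrow> real" where
  "llr Q Qb s = sum_list (map (\<lambda>a. ln (Q a / Qb a)) s)"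

lemma kl_div_eq_sum: "kl_div Q Qb = (\<Sum>a\<in>UNIV. Q a * ln (Q a / Qb a))"
  unfolding kl_div_def by (rule sum.cong) auto

lemma prod_list_eq_exp_llr:
  assumes "\<forall>a\<in>set s. 0 < Q a" and "\<forall>a. 0 < Qb a"
  shows "prod_list (map Q s) = prod_list (map Qb s) * exp (llr Q Qb s)"
  using assms(1)
proof (induction s)
  case (Cons a s)
  have "exp (ln (Q a / Qb a)) = Q a / Qb a" and "0 < Qb a"
    using Cons.prems assms(2) by auto
  then show ?case using Cons by (simp add: llr_def exp_add field_simps)
qed (simp add: llr_def)

lemma seq_prob_llr_ge:
  assumes "is_pmf Q" and "\<forall>a. 0 < Qb a"
  shows "seq_prob Qb n (\<lambda>s. (\<forall>a\<in>set s. 0 < Q a) \<and> t \<le> llr Q Qb s) \<le> exp (- t)"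
proof -
  let ?E = "\<lambda>s. (\<forall>a\<in>set s. 0 < Q a) \<and> t \<le> llr Q Qb s"
  have "seq_prob Qb n ?E \<le> exp (- t) * seq_prob Q n ?E"
    unfolding seq_prob_def sum_distrib_left
  proof (rule sum_mono)
    fix s assume "s \<in> {s. length s = n \<and> ?E s}"
    then have pos: "\<forall>a\<in>set s. 0 < Q a" and "t \<le> llr Q Qb s" by auto
    then have "prod_list (map Qb s) = prod_list (map Q s) * exp (- llr Q Qb s)"
      using prod_list_eq_exp_llr[OF pos assms(2)] by (simp add: exp_minus field_simps)
    also have "\<dots> \<le> prod_list (map Q s) * exp (- t)"
      using \<open>t \<le> llr Q Qb s\<close> assms(1) prod_list_nonneg[of Q s]
      by (intro mult_left_mono) (auto simp: is_pmf_def)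
    finally show "prod_list (map Qb s) \<le> exp (- t) * prod_list (map Q s)"
      by (simp add: mult.commute)
  qed
  also have "\<dots> \<le> exp (- t)"
    using seq_prob_le_1[OF assms(1)] by (simp add: mult_left_le)
  finally show ?thesis .
qed

lemma seq_prob_llr_le:
  assumes "\<forall>a. 0 \<le> Q a" and "\<forall>a. 0 < Qb a"
  shows "seq_prob Q n (\<lambda>s. E s \<and> llr Q Qb s \<le> t) \<le> exp t * seq_prob Qb n E"
proof -
  have "seq_prob Q n (\<lambda>s. E s \<and> llr Q Qb s \<le> t) \<le> exp t * seq_prob Qb n (\<lambda>s. E s \<and> llr Q Qb s \<le> t)"
    unfolding seq_prob_def sum_distrib_left
  proof (rule sum_mono)
    fix s assume "s \<in> {s. length s = n \<and> E s \<and> llr Q Qb s \<le> t}"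
    then have "llr Q Qb s \<le> t" by simp
    have Qb_nonneg: "0 \<le> prod_list (map Qb s)"
      using assms(2) by (intro prod_list_nonneg) (auto intro: less_imp_le)
    show "prod_list (map Q s) \<le> exp t * prod_list (map Qb s)"
    proof (cases "\<forall>a\<in>set s. 0 < Q a")
      case True
      have "prod_list (map Q s) = prod_list (map Qb s) * exp (llr Q Qb s)"
        by (rule prod_list_eq_exp_llr[OF True assms(2)])
      also have "\<dots> \<le> prod_list (map Qb s) * exp t"
        using \<open>llr Q Qb s \<le> t\<close> Qb_nonneg by (intro mult_left_mono) auto
      finally show ?thesis by (simp add: mult.commute)
    next
      case False
      then obtain a where "a \<in> set s" "Q a = 0"
        using assms(1) by (force simp: less_le)
      then have "prod_list (map Q s) = 0" by (auto simp: prod_list_zero_iff)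
      then show ?thesis using Qb_nonneg by simp
    qed
  qed
  also have "\<dots> \<le> exp t * seq_prob Qb n E"
    using assms(2) by (intro mult_left_mono seq_prob_mono) (auto intro: less_imp_le)
  finally show ?thesis .
qed

lemma llr_concentration:
  assumes "is_pmf Q" and "0 < \<delta>"
  shows "(\<lambda>n. seq_prob Q n (\<lambda>s. real n * \<delta> \<le> \<bar>llr Q Qb s - real n * kl_div Q Qb\<bar>)) \<longlonglongrightarrow> 0"
proof -
  have "(\<lambda>n. real n / (real n * \<delta>)\<^sup>2) \<longlonglongrightarrow> 0"
    using \<open>0 < \<delta>\<close> by real_asymp
  moreover have "\<forall>\<^sub>F n in sequentially. 0 < real n * \<delta>"
    using eventually_gt_at_top[of 0] by eventually_elim (use \<open>0 < \<delta>\<close> in simp)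
  ultimately show ?thesis
    using seq_prob_deviation_tendsto_0[OF assms(1), of "\<lambda>n. real n * \<delta>" "\<lambda>a. ln (Q a / Qb a)"]
    unfolding llr_def kl_div_eq_sum by simp
qed

text \<open>The support condition excludes the junk value \<open>ln 0 = 0\<close> from \<^const>\<open>llr\<close>.\<close>
definition stein_region :: "('a::finite \<Rightarrow> real) \<Rightarrow> ('a \<Rightarrow> real) \<Rightarrow> real \<Rightarrow> nat \<Rightarrow> 'a list \<Rightarrow> bool" where
  "stein_region Q Qb \<delta> n s \<longleftrightarrow> (\<forall>a\<in>set s. 0 < Q a) \<and> real n * (kl_div Q Qb - \<delta>) \<le> llr Q Qb s"

lemma seq_prob_stein_region_le:
  assumes "is_pmf Q" and "\<forall>a. 0 < Qb a"
  shows "seq_prob Qb n (stein_region Q Qb \<delta> n) \<le> exp (- (real n * (kl_div Q Qb - \<delta>)))"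
  unfolding stein_region_def by (rule seq_prob_llr_ge[OF assms])

lemma seq_prob_not_stein_region_tendsto_0:
  assumes Q: "is_pmf Q" and "0 < \<delta>"
  shows "(\<lambda>n. seq_prob Q n (\<lambda>s. \<not> stein_region Q Qb \<delta> n s)) \<longlonglongrightarrow> 0"
proof (rule Lim_null_comparison[OF _ llr_concentration[OF assms, of Qb]],
    intro always_eventually allI)
  fix n
  have "seq_prob Q n (\<lambda>s. \<not> stein_region Q Qb \<delta> n s)
      \<le> seq_prob Q n (\<lambda>s. real n * \<delta> \<le> \<bar>llr Q Qb s - real n * kl_div Q Qb\<bar>)"
  proof (rule seq_prob_mono)
    fix s assume "\<forall>a\<in>set s. Q a \<noteq> 0" and "\<not> stein_region Q Qb \<delta> n s"
    then have "llr Q Qb s < real n * (kl_div Q Qb - \<delta>)"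
      using Q by (auto simp: stein_region_def is_pmf_def order.strict_iff_order)
    then show "real n * \<delta> \<le> \<bar>llr Q Qb s - real n * kl_div Q Qb\<bar>"
      by (simp add: algebra_simps)
  qed (use Q in \<open>simp add: is_pmf_def\<close>)
  then show "norm (seq_prob Q n (\<lambda>s. \<not> stein_region Q Qb \<delta> n s))
      \<le> seq_prob Q n (\<lambda>s. real n * \<delta> \<le> \<bar>llr Q Qb s - real n * kl_div Q Qb\<bar>)"
    using Q seq_prob_nonneg[of Q] by (simp add: is_pmf_def)
qed

lemma liminf_err_exp_ge:
  assumes "\<forall>\<^sub>F n in sequentially. 0 \<le> b n \<and> b n \<le> 1 \<and> b n \<le> exp (- (real n * a))"
  shows "ereal (max 0 a) \<le> liminf (\<lambda>n. err_exp n (b n))"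
proof -
  have "\<forall>\<^sub>F n in sequentially. ereal (max 0 a) \<le> err_exp n (b n)"
    using assms eventually_gt_at_top[of 0]
  proof eventually_elim
    case (elim n)
    show ?case
    proof (cases "b n = 0")
      case False
      then have "0 < b n" using elim by simp
      then have "ln (b n) \<le> - (real n * a)" and "ln (b n) \<le> 0"
        using elim by (metis ln_exp ln_le_cancel_iff exp_gt_zero, simp)
      then have "max 0 a * real n \<le> - ln (b n)" by (simp add: max_def mult.commute)
      then have "max 0 a \<le> - ln (b n) / real n"
        using elim by (subst pos_le_divide_eq) auto
      then show ?thesis
        using False by (simp add: err_exp_def)
    qed (simp add: err_exp_def)
  qed
  then have "liminf (\<lambda>_. ereal (max 0 a)) \<le> liminf (\<lambda>n. err_exp n (b n))"
    by (rule Liminf_mono)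
  then show ?thesis
    by (metis Liminf_const trivial_limit_sequentially)
qed

lemma liminf_err_exp_seq_prob_ge:
  assumes "is_pmf Q" and "\<And>n s. length s = n \<Longrightarrow> E n s \<Longrightarrow> F n s"
    and "\<And>n. seq_prob Q n (F n) \<le> exp (- (real n * a))"
  shows "ereal (max 0 a) \<le> liminf (\<lambda>n. err_exp n (seq_prob Q n (E n)))"
proof (rule liminf_err_exp_ge[OF always_eventually], intro allI conjI)
  have Q0: "\<forall>a. 0 \<le> Q a" using assms(1) by (simp add: is_pmf_def)
  fix n
  show "0 \<le> seq_prob Q n (E n)" and "seq_prob Q n (E n) \<le> 1"
    using seq_prob_nonneg[OF Q0] seq_prob_le_1[OF assms(1)] by auto
  have "seq_prob Q n (E n) \<le> seq_prob Q n (F n)"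
    using Q0 assms(2) by (rule seq_prob_mono)
  then show "seq_prob Q n (E n) \<le> exp (- (real n * a))"
    using assms(3)[of n] by linarith
qed

lemma liminf_err_exp_le:
  assumes "0 < k" and "\<forall>\<^sub>F n in sequentially. k * exp (- (real n * a)) \<le> b n"
  shows "liminf (\<lambda>n. err_exp n (b n)) \<le> ereal a"
proof -
  have "\<forall>\<^sub>F n in sequentially. err_exp n (b n) \<le> ereal (a - ln k / real n)"
    using assms(2) eventually_gt_at_top[of 0]
  proof eventually_elim
    case (elim n)
    have kpos: "0 < k * exp (- (real n * a))" using assms(1) by simp
    then have "0 < b n" using elim by linarith
    have "ln k - real n * a = ln (k * exp (- (real n * a)))"
      using assms(1) by (simp add: ln_mult)
    also have "\<dots> \<le> ln (b n)"
      using elim kpos by simp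
    finally have "ln k - real n * a \<le> ln (b n)" .
    then have "- ln (b n) / real n \<le> (real n * a - ln k) / real n"
      using elim by (intro divide_right_mono) auto
    also have "\<dots> = a - ln k / real n" using elim by (simp add: field_simps)
    finally show ?case using \<open>0 < b n\<close> by (simp add: err_exp_def)
  qed
  then have "liminf (\<lambda>n. err_exp n (b n)) \<le> liminf (\<lambda>n. ereal (a - ln k / real n))"
    by (rule Liminf_mono)
  also have "(\<lambda>n. ereal (a - ln k / real n)) \<longlonglongrightarrow> ereal (a - 0)"
    unfolding lim_ereal
    by (intro tendsto_intros tendsto_divide_0[OF tendsto_const] filterlim_real_sequentially)
  then have "liminf (\<lambda>n. ereal (a - ln k / real n)) = ereal a"
    using lim_imp_Liminf by force
  finally show ?thesis .
qed

text \<open>Strong converse: intersected with \<open>{llr \<le> n (D + \<delta>)}\<close>, the acceptance event keeps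
  \<open>Q\<close>-probability bounded away from zero, and on it the two product measures differ by a
  factor at most \<open>exp (n (D + \<delta>))\<close>.\<close>
lemma stein_converse:
  assumes Q: "is_pmf Q" and Qb: "\<forall>a. 0 < Qb a" and "eps < 1"
    and alpha: "limsup (\<lambda>n. ereal (seq_prob Q n (\<lambda>s. \<not> E n s))) \<le> ereal eps"
  shows "liminf (\<lambda>n. err_exp n (seq_prob Qb n (E n))) \<le> ereal (kl_div Q Qb)"
proof (rule ereal_le_epsilon2)
  fix \<delta> :: real assume "0 < \<delta>"
  define c where "c = (1 - eps) / 2"
  define D where "D = kl_div Q Qb"
  have "0 < c" using \<open>eps < 1\<close> by (simp add: c_def)
  have Q0: "\<forall>a. 0 \<le> Q a" using Q by (simp add: is_pmf_def)
  have "limsup (\<lambda>n. ereal (seq_prob Q n (\<lambda>s. \<not> E n s))) < ereal (1 - c)"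
    by (rule le_less_trans[OF alpha]) (use \<open>eps < 1\<close> in \<open>simp add: c_def field_simps\<close>)
  then have "\<forall>\<^sub>F n in sequentially. ereal (seq_prob Q n (\<lambda>s. \<not> E n s)) < ereal (1 - c)"
    by (rule Limsup_lessD)
  then have accept: "\<forall>\<^sub>F n in sequentially. c < seq_prob Q n (E n)"
    by eventually_elim (simp add: seq_prob_not[OF Q])
  have "\<forall>\<^sub>F n in sequentially. seq_prob Q n (\<lambda>s. real n * \<delta> \<le> \<bar>llr Q Qb s - real n * D\<bar>) < c / 2"
    using llr_concentration[OF Q \<open>0 < \<delta>\<close>, of Qb] \<open>0 < c\<close> unfolding D_def
    by (intro order_tendstoD) auto
  with accept have "\<forall>\<^sub>F n in sequentially. c / 2 * exp (- (real n * (D + \<delta>))) \<le> seq_prob Qb n (E n)"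
  proof eventually_elim
    case (elim n)
    have "seq_prob Q n (E n)
        \<le> seq_prob Q n (\<lambda>s. (E n s \<and> llr Q Qb s \<le> real n * (D + \<delta>))
                          \<or> real n * \<delta> \<le> \<bar>llr Q Qb s - real n * D\<bar>)"
      using Q0 by (intro seq_prob_mono) (auto simp: distrib_left abs_if)
    also have "\<dots> \<le> seq_prob Q n (\<lambda>s. E n s \<and> llr Q Qb s \<le> real n * (D + \<delta>))
        + seq_prob Q n (\<lambda>s. real n * \<delta> \<le> \<bar>llr Q Qb s - real n * D\<bar>)"
      by (rule seq_prob_disj_le[OF Q0])
    also have "\<dots> \<le> exp (real n * (D + \<delta>)) * seq_prob Qb n (E n) + c / 2"
      using seq_prob_llr_le[OF Q0 Qb, of n "E n" "real n * (D + \<delta>)"] elim(2) by linarith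
    finally have "c / 2 \<le> exp (real n * (D + \<delta>)) * seq_prob Qb n (E n)"
      using elim(1) by simp
    then have "c / 2 * exp (- (real n * (D + \<delta>)))
        \<le> exp (real n * (D + \<delta>)) * seq_prob Qb n (E n) * exp (- (real n * (D + \<delta>)))"
      by (rule mult_right_mono) simp
    then show ?case
      using exp_minus_inverse[of "real n * (D + \<delta>)"] by (simp add: ac_simps)
  qed
  then have "liminf (\<lambda>n. err_exp n (seq_prob Qb n (E n))) \<le> ereal (D + \<delta>)"
    using \<open>0 < c\<close> by (intro liminf_err_exp_le[of "c / 2"]) auto
  then show "liminf (\<lambda>n. err_exp n (seq_prob Qb n (E n))) \<le> ereal (kl_div Q Qb) + ereal \<delta>"
    by (simp add: D_def)
qed

section \<open>Sets of likely sequences\<close>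

lemma prod_list_eq_exp_sum_ln:
  "\<forall>a\<in>set s. 0 < w a \<Longrightarrow> prod_list (map w s) = exp (sum_list (map (\<lambda>a. ln (w a)) s))"
  for w :: "'a \<Rightarrow> real"
  by (induction s) (auto simp: exp_add)

lemma seq_prob_unlikely_tendsto_0:
  assumes P: "is_pmf P" and w: "\<forall>a. 0 < P a \<longrightarrow> 0 < w a"
  shows "(\<lambda>n. seq_prob P n (\<lambda>s. prod_list (map w s)
            < exp (- (real n * (\<Sum>a\<in>UNIV. P a * - ln (w a)) + real n powr (3/4))))) \<longlonglongrightarrow> 0"
proof -
  define H where "H = (\<Sum>a\<in>UNIV. P a * - ln (w a))"
  have P0: "\<forall>a. 0 \<le> P a" using P by (simp add: is_pmf_def)
  have "\<forall>\<^sub>F n in sequentially. 0 < real n powr (3/4)"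
    using eventually_gt_at_top[of 0] by eventually_elim simp
  moreover have "(\<lambda>n. real n / (real n powr (3/4))\<^sup>2) \<longlonglongrightarrow> 0" by real_asymp
  ultimately have deviation: "(\<lambda>n. seq_prob P n (\<lambda>s. real n powr (3/4)
      \<le> \<bar>sum_list (map (\<lambda>a. - ln (w a)) s) - real n * H\<bar>)) \<longlonglongrightarrow> 0"
    unfolding H_def by (rule seq_prob_deviation_tendsto_0[OF P])
  show ?thesis unfolding H_def[symmetric]
  proof (rule Lim_null_comparison[OF always_eventually deviation], intro allI)
    fix n
    have "seq_prob P n (\<lambda>s. prod_list (map w s) < exp (- (real n * H + real n powr (3/4))))
        \<le> seq_prob P n (\<lambda>s. real n powr (3/4) \<le> \<bar>sum_list (map (\<lambda>a. - ln (w a)) s) - real n * H\<bar>)"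
    proof (rule seq_prob_mono[OF P0])
      fix s assume "\<forall>a\<in>set s. P a \<noteq> 0"
        and unlikely: "prod_list (map w s) < exp (- (real n * H + real n powr (3/4)))"
      then have "\<forall>a\<in>set s. 0 < w a" using w P0 by (auto simp: less_le)
      moreover have "sum_list (map (\<lambda>a. - ln (w a)) s) = - sum_list (map (\<lambda>a. ln (w a)) s)"
        by (induction s) auto
      ultimately have "prod_list (map w s) = exp (- sum_list (map (\<lambda>a. - ln (w a)) s))"
        by (simp add: prod_list_eq_exp_sum_ln)
      then show "real n powr (3/4) \<le> \<bar>sum_list (map (\<lambda>a. - ln (w a)) s) - real n * H\<bar>"
        using unlikely by simp
    qed
    then show "norm (seq_prob P n (\<lambda>s. prod_list (map w s)
        < exp (- (real n * H + real n powr (3/4)))))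
        \<le> seq_prob P n (\<lambda>s. real n powr (3/4) \<le> \<bar>sum_list (map (\<lambda>a. - ln (w a)) s) - real n * H\<bar>)"
      using seq_prob_nonneg[OF P0] by simp
  qed
qed

lemma card_weight_ge_le:
  assumes "finite U" "\<forall>x\<in>U. 0 \<le> w x" "(\<Sum>x\<in>U. w x) \<le> 1" "0 < c"
  shows "real (card {x\<in>U. c \<le> w x}) \<le> 1 / c"
proof -
  have "real (card {x\<in>U. c \<le> w x}) * c = (\<Sum>x\<in>{x\<in>U. c \<le> w x}. c)" by simp
  also have "\<dots> \<le> (\<Sum>x\<in>{x\<in>U. c \<le> w x}. w x)" by (rule sum_mono) auto
  also have "\<dots> \<le> (\<Sum>x\<in>U. w x)" by (rule sum_mono2) (use assms in auto)
  finally show ?thesis using assms by (simp add: field_simps)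
qed

lemma sum_prod_list_zip_le:
  fixes W :: "'a \<times> 'b::finite \<Rightarrow> real"
  assumes "\<forall>b. 0 \<le> W b" and "\<forall>a. (\<Sum>y\<in>UNIV. W (a, y)) \<le> 1" and "length x = n"
  shows "(\<Sum>y | length y = n. prod_list (map W (zip x y))) \<le> 1"
  using assms(3)
proof (induction x arbitrary: n)
  case (Cons a x)
  then obtain m where n: "n = Suc m" and "length x = m" by auto
  have "(\<Sum>y | length y = n. prod_list (map W (zip (a # x) y)))
      = (\<Sum>c\<in>UNIV. W (a, c) * (\<Sum>y | length y = m. prod_list (map W (zip x y))))"
    unfolding n sum_lists_length_Suc by (simp add: sum_distrib_left)
  also have "\<dots> \<le> (\<Sum>c\<in>UNIV. W (a, c))"
    using Cons.IH[OF \<open>length x = m\<close>] assms(1) prod_list_nonneg[OF assms(1)]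
    by (intro sum_mono mult_right_le_one_le) (auto intro: sum_nonneg)
  finally show ?case using assms(2)[rule_format, of a] by linarith
qed simp

lemma card_likely_seqs_le:
  assumes "is_pmf p"
  shows "real (card {s. length s = n \<and> exp (- r) \<le> prod_list (map p s)}) \<le> exp r"
proof -
  have "(\<Sum>s | length s = n. prod_list (map p s)) = 1"
    using seq_expect_const[OF assms, of n 1] by (simp add: seq_expect_def)
  then have "real (card {s \<in> {s. length s = n}. exp (- r) \<le> prod_list (map p s)}) \<le> 1 / exp (- r)"
    using assms
    by (intro card_weight_ge_le finite_lists_length) (auto simp: is_pmf_def prod_list_nonneg)
  then show ?thesis by (simp add: exp_minus divide_inverse)
qed

lemma card_likely_cond_seqs_le:
  fixes W :: "'a \<times> 'b::finite \<Rightarrow> real"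
  assumes "\<forall>b. 0 \<le> W b" and "\<forall>a. (\<Sum>y\<in>UNIV. W (a, y)) \<le> 1" and "length x = n"
  shows "real (card {y. length y = n \<and> exp (- r) \<le> prod_list (map W (zip x y))}) \<le> exp r"
proof -
  have "real (card {y \<in> {y. length y = n}. exp (- r) \<le> prod_list (map W (zip x y))})
      \<le> 1 / exp (- r)"
    using assms prod_list_nonneg[OF assms(1)]
    by (intro card_weight_ge_le finite_lists_length sum_prod_list_zip_le) auto
  then show ?thesis by (simp add: exp_minus divide_inverse)
qed

lemma limsup_rate_le:
  assumes K: "\<And>n. real (K n) \<le> exp (real n * H + real n powr (3/4))" and "0 \<le> H" "H \<le> R"
  shows "limsup (\<lambda>n. ereal (ln (real (K n + 1)) / real n)) \<le> ereal R"
proof -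
  have "\<forall>\<^sub>F n in sequentially.
      ereal (ln (real (K n + 1)) / real n) \<le> ereal (H + real n powr (3/4) / real n + ln 2 / real n)"
    using eventually_gt_at_top[of 0]
  proof eventually_elim
    case (elim n)
    define r where "r = real n * H + real n powr (3/4)"
    have "1 \<le> exp r" using \<open>0 \<le> H\<close> by (simp add: r_def)
    then have "real (K n + 1) \<le> exp r * 2"
      using K[of n] unfolding r_def of_nat_add of_nat_1 by linarith
    then have "ln (real (K n + 1)) \<le> ln (exp r * 2)"
      by (subst ln_le_cancel_iff) auto
    also have "\<dots> = r + ln 2" by (simp add: ln_mult)
    finally have "ln (real (K n + 1)) \<le> r + ln 2" .
    then have "ln (real (K n + 1)) / real n \<le> (r + ln 2) / real n"
      using elim by (intro divide_right_mono) auto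
    then show ?case using elim by (simp add: r_def field_simps)
  qed
  then have "limsup (\<lambda>n. ereal (ln (real (K n + 1)) / real n))
      \<le> limsup (\<lambda>n. ereal (H + real n powr (3/4) / real n + ln 2 / real n))"
    by (rule Limsup_mono)
  also have "(\<lambda>n. ereal (H + real n powr (3/4) / real n + ln 2 / real n)) \<longlonglongrightarrow> ereal (H + 0 + 0)"
    unfolding lim_ereal
    by (intro tendsto_intros tendsto_divide_0[OF tendsto_const] filterlim_real_sequentially)
      real_asymp
  then have "limsup (\<lambda>n. ereal (H + real n powr (3/4) / real n + ln 2 / real n)) = ereal H"
    using lim_imp_Limsup by force
  finally show ?thesis using \<open>H \<le> R\<close> by (simp add: order_trans)
qed

section \<open>Two-stage binning codes\<close>

definition enum_set :: "'a set \<Rightarrow> nat \<Rightarrow> 'a" where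
  "enum_set A = (SOME h. bij_betw h {0..<card A} A)"

definition encode :: "'a set \<Rightarrow> 'a \<Rightarrow> nat" where
  "encode A a = (if a \<in> A then inv_into {0..<card A} (enum_set A) a + 2 else 1)"

definition decode :: "'a set \<Rightarrow> nat \<Rightarrow> 'a" where
  "decode A m = enum_set A (m - 2)"

lemma bij_betw_enum_set:
  assumes "finite A" shows "bij_betw (enum_set A) {0..<card A} A"
  unfolding enum_set_def using ex_bij_betw_nat_finite[OF assms] by (rule someI_ex)

lemma encode_range:
  assumes "finite A" shows "encode A a \<in> {1..card A + 1}"
proof (cases "a \<in> A")
  case True
  then have "inv_into {0..<card A} (enum_set A) a \<in> {0..<card A}"
    using bij_betw_enum_set[OF assms] by (metis bij_betw_def inv_into_into)
  then show ?thesis using True by (simp add: encode_def)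
qed (simp add: encode_def)

lemma two_le_encode_iff: "2 \<le> encode A a \<longleftrightarrow> a \<in> A"
  by (simp add: encode_def)

lemma decode_encode: "finite A \<Longrightarrow> a \<in> A \<Longrightarrow> decode A (encode A a) = a"
  using bij_betw_enum_set[of A] by (simp add: encode_def decode_def bij_betw_def f_inv_into_f)

lemma decode_mem: "finite A \<Longrightarrow> m \<in> {2..card A + 1} \<Longrightarrow> decode A m \<in> A"
  using bij_betw_enum_set[of A] by (auto simp: decode_def bij_betw_def)

text \<open>Detector 1 decodes \<open>X\<^sup>n\<close> from \<open>M\<^sub>1\<close> whenever \<open>X\<^sup>n \<in> S n\<close> and forwards \<open>Y\<^sub>1\<^sup>n\<close> through
  \<open>M\<^sub>2\<close> whenever \<open>Y\<^sub>1\<^sup>n \<in> T n X\<^sup>n\<close>; message \<open>1\<close> signals failure, upon which the detectors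
  decide for the alternative.\<close>
lemma two_stage_code:
  fixes S :: "nat \<Rightarrow> 'x list set" and T :: "nat \<Rightarrow> 'x list \<Rightarrow> 'y1 list set"
    and A1 :: "nat \<Rightarrow> ('x \<times> 'y1) list \<Rightarrow> bool" and A2 :: "nat \<Rightarrow> ('x \<times> 'y1 \<times> 'y2) list \<Rightarrow> bool"
  assumes finS: "\<And>n. finite (S n)" and finT: "\<And>n x. finite (T n x)"
    and cardT: "\<And>n x. x \<in> S n \<Longrightarrow> card (T n x) \<le> K2 n"
  obtains phi1 phi2 psi1 psi2 where
    "valid_codes (\<lambda>n. card (S n) + 1) (\<lambda>n. K2 n + 1) phi1 phi2 psi1 psi2"
    "\<And>n (s :: ('x \<times> 'y1 \<times> 'y2) list).
       dec1 phi1 psi1 n s = (if xs_of s \<in> S n \<and> A1 n (zip (xs_of s) (y1s_of s)) then 1 else 2)"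
    "\<And>n s. dec2 phi1 phi2 psi2 n s
       = (if xs_of s \<in> S n \<and> y1s_of s \<in> T n (xs_of s) \<and> A2 n s then 1 else 2)"
proof
  define phi1 where "phi1 n x = encode (S n) x" for n x
  define psi1 where "psi1 n m y = (if 2 \<le> m \<and> A1 n (zip (decode (S n) m) y) then 1 else 2::nat)"
    for n m y
  define phi2 where "phi2 n m y = (if 2 \<le> m then encode (T n (decode (S n) m)) y else 1)" for n m y
  define psi2 where "psi2 n m1 m2 z = (let x = decode (S n) m1 in
      if 2 \<le> m1 \<and> 2 \<le> m2 \<and> A2 n (zip x (zip (decode (T n x) m2) z)) then 1 else 2::nat)"
    for n m1 m2 z
  show "valid_codes (\<lambda>n. card (S n) + 1) (\<lambda>n. K2 n + 1) phi1 phi2 psi1 psi2"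
    unfolding valid_codes_def
  proof (intro allI conjI impI)
    fix n m and y :: "'y1 list"
    assume "m \<in> {1..card (S n) + 1} \<and> length y = n"
    show "phi2 n m y \<in> {1..K2 n + 1}"
    proof (cases "2 \<le> m")
      case True
      then have "decode (S n) m \<in> S n"
        using \<open>m \<in> {1..card (S n) + 1} \<and> length y = n\<close> finS by (intro decode_mem) auto
      then show ?thesis
        using True encode_range[OF finT, of n "decode (S n) m" y] cardT[of "decode (S n) m" n]
        by (auto simp: phi2_def)
    qed (simp add: phi2_def)
  qed (use encode_range[OF finS] in \<open>auto simp: phi1_def psi1_def psi2_def Let_def\<close>)
  fix n and s :: "('x \<times> 'y1 \<times> 'y2) list"
  have zip_s: "zip (xs_of s) (zip (y1s_of s) (y2s_of s)) = s"
    by (induction s) (auto simp: xs_of_def y1s_of_def y2s_of_def)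
  show "dec1 phi1 psi1 n s = (if xs_of s \<in> S n \<and> A1 n (zip (xs_of s) (y1s_of s)) then 1 else 2)"
    using finS by (auto simp: dec1_def phi1_def psi1_def two_le_encode_iff decode_encode)
  show "dec2 phi1 phi2 psi2 n s
      = (if xs_of s \<in> S n \<and> y1s_of s \<in> T n (xs_of s) \<and> A2 n s then 1 else 2)"
    using finS finT zip_s
    by (auto simp: dec2_def phi1_def phi2_def psi2_def Let_def two_le_encode_iff decode_encode)
qed

lemma limsup_le_if_tendsto_0:
  assumes "a \<longlonglongrightarrow> 0" and "0 \<le> e"
  shows "limsup (\<lambda>n. ereal (a n)) \<le> ereal e"
proof -
  have "(\<lambda>n. ereal (a n)) \<longlonglongrightarrow> ereal 0"
    using assms(1) by (simp add: lim_ereal)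
  then have "limsup (\<lambda>n. ereal (a n)) = ereal 0"
    using lim_imp_Limsup by force
  then show ?thesis using assms(2) by simp
qed

lemma achievable_if_likely_sets:
  fixes P Pbar :: "'x::finite \<times> 'y1::finite \<times> 'y2::finite \<Rightarrow> real"
    and S :: "nat \<Rightarrow> 'x list set" and T :: "nat \<Rightarrow> 'x list \<Rightarrow> 'y1 list set"
    and A1 :: "nat \<Rightarrow> ('x \<times> 'y1) list \<Rightarrow> bool" and A2 :: "nat \<Rightarrow> ('x \<times> 'y1 \<times> 'y2) list \<Rightarrow> bool"
  assumes P: "is_pmf P" and Pbar: "is_pmf Pbar"
    and finS: "\<And>n. finite (S n)" and finT: "\<And>n x. finite (T n x)"
    and cardT: "\<And>n x. x \<in> S n \<Longrightarrow> card (T n x) \<le> K2 n"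
    and rate1: "limsup (\<lambda>n. ereal (ln (real (card (S n) + 1)) / real n)) \<le> ereal R1"
    and rate2: "limsup (\<lambda>n. ereal (ln (real (K2 n + 1)) / real n)) \<le> ereal R2"
    and miss_S: "(\<lambda>n. seq_prob P n (\<lambda>s. xs_of s \<notin> S n)) \<longlonglongrightarrow> 0"
    and miss_T: "(\<lambda>n. seq_prob P n (\<lambda>s. y1s_of s \<notin> T n (xs_of s))) \<longlonglongrightarrow> 0"
    and miss_A1: "(\<lambda>n. seq_prob P n (\<lambda>s. \<not> A1 n (zip (xs_of s) (y1s_of s)))) \<longlonglongrightarrow> 0"
    and miss_A2: "(\<lambda>n. seq_prob P n (\<lambda>s. \<not> A2 n s)) \<longlonglongrightarrow> 0"
    and false_A1: "\<And>n. seq_prob Pbar n (\<lambda>s. A1 n (zip (xs_of s) (y1s_of s)))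
                          \<le> exp (- (real n * a1))"
    and false_A2: "\<And>n. seq_prob Pbar n (A2 n) \<le> exp (- (real n * a2))"
    and "0 \<le> eps1" "0 \<le> eps2" "0 \<le> th1" "th1 \<le> max 0 a1" "0 \<le> th2" "th2 \<le> max 0 a2"
  shows "achievable P Pbar R1 R2 eps1 eps2 th1 th2"
proof -
  obtain phi1 phi2 psi1 psi2 where
    valid: "valid_codes (\<lambda>n. card (S n) + 1) (\<lambda>n. K2 n + 1) phi1 phi2 psi1 psi2"
    and dec1: "\<And>n (s :: ('x \<times> 'y1 \<times> 'y2) list). dec1 phi1 psi1 n s
                 = (if xs_of s \<in> S n \<and> A1 n (zip (xs_of s) (y1s_of s)) then 1 else 2)"
    and dec2: "\<And>n s. dec2 phi1 phi2 psi2 n s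
                 = (if xs_of s \<in> S n \<and> y1s_of s \<in> T n (xs_of s) \<and> A2 n s then 1 else 2)"
    using two_stage_code[where S = S and T = T and ?K2.0 = K2 and ?A1.0 = A1 and ?A2.0 = A2,
          OF finS finT cardT] by blast
  have P0: "\<forall>a. 0 \<le> P a"
    using P by (simp add: is_pmf_def)
  have "(\<lambda>n. seq_prob P n (\<lambda>s. dec1 phi1 psi1 n s \<noteq> 1)) \<longlonglongrightarrow> 0"
    by (rule seq_prob_tendsto_0_if_disj[OF P0 _ miss_S miss_A1])
      (auto simp only: dec1 split: if_splits)
  then have alpha1: "limsup (\<lambda>n. ereal (seq_prob P n (\<lambda>s. dec1 phi1 psi1 n s \<noteq> 1))) \<le> ereal eps1"
    using \<open>0 \<le> eps1\<close> by (rule limsup_le_if_tendsto_0)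
  have miss_S_or_T: "(\<lambda>n. seq_prob P n (\<lambda>s. xs_of s \<notin> S n \<or> y1s_of s \<notin> T n (xs_of s))) \<longlonglongrightarrow> 0"
    by (rule seq_prob_tendsto_0_if_disj[OF P0 _ miss_S miss_T])
  have "(\<lambda>n. seq_prob P n (\<lambda>s. dec2 phi1 phi2 psi2 n s \<noteq> 1)) \<longlonglongrightarrow> 0"
    by (rule seq_prob_tendsto_0_if_disj[OF P0 _ miss_S_or_T miss_A2])
      (auto simp only: dec2 split: if_splits)
  then have alpha2:
      "limsup (\<lambda>n. ereal (seq_prob P n (\<lambda>s. dec2 phi1 phi2 psi2 n s \<noteq> 1))) \<le> ereal eps2"
    using \<open>0 \<le> eps2\<close> by (rule limsup_le_if_tendsto_0)
  have "ereal (max 0 a1) \<le> liminf (\<lambda>n. err_exp n (seq_prob Pbar n (\<lambda>s. dec1 phi1 psi1 n s \<noteq> 2)))"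
    by (rule liminf_err_exp_seq_prob_ge[OF Pbar _ false_A1]) (auto simp only: dec1 split: if_splits)
  then have beta1:
      "ereal th1 \<le> liminf (\<lambda>n. err_exp n (seq_prob Pbar n (\<lambda>s. dec1 phi1 psi1 n s \<noteq> 2)))"
    using \<open>th1 \<le> max 0 a1\<close> by (meson order_trans ereal_less_eq(3))
  have "ereal (max 0 a2)
      \<le> liminf (\<lambda>n. err_exp n (seq_prob Pbar n (\<lambda>s. dec2 phi1 phi2 psi2 n s \<noteq> 2)))"
    by (rule liminf_err_exp_seq_prob_ge[OF Pbar _ false_A2]) (auto simp only: dec2 split: if_splits)
  then have beta2:
      "ereal th2 \<le> liminf (\<lambda>n. err_exp n (seq_prob Pbar n (\<lambda>s. dec2 phi1 phi2 psi2 n s \<noteq> 2)))"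
    using \<open>th2 \<le> max 0 a2\<close> by (meson order_trans ereal_less_eq(3))
  show ?thesis
    unfolding achievable_def
    using \<open>0 \<le> th1\<close> \<open>0 \<le> th2\<close> valid alpha1 alpha2 beta1 beta2 rate1 rate2 by blast
qed

definition xy1_of :: "'x \<times> 'y1 \<times> 'y2 \<Rightarrow> 'x \<times> 'y1" where
  "xy1_of t = (fst t, fst (snd t))"

text \<open>Zero where \<^term>\<open>marg_X P\<close> vanishes, by the division convention \<open>x / 0 = 0\<close>.\<close>
definition cond_Y1_X :: "('x::finite \<times> 'y1::finite \<times> 'y2::finite \<Rightarrow> real) \<Rightarrow> 'x \<times> 'y1 \<Rightarrow> real" where
  "cond_Y1_X P b = marg_XY1 P b / marg_X P (fst b)"

lemma sum_pair_UNIV: "(\<Sum>b\<in>UNIV. F b) = (\<Sum>x\<in>UNIV. \<Sum>y\<in>UNIV. F (x, y))"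
  for F :: "'a::finite \<times> 'b::finite \<Rightarrow> 'c::comm_monoid_add"
  by (simp add: sum.cartesian_product UNIV_Times_UNIV[symmetric] del: UNIV_Times_UNIV)

lemma marg_X_eq_push_pmf:
  fixes P :: "'x::finite \<times> 'y1::finite \<times> 'y2::finite \<Rightarrow> real"
  shows "marg_X P = push_pmf fst P"
proof
  fix x :: 'x
  have fiber: "{a. fst a = x} = Pair x ` UNIV" by (auto simp: image_iff)
  have "inj (Pair x :: 'y1 \<times> 'y2 \<Rightarrow> _)" by (auto simp: inj_on_def)
  then show "marg_X P x = push_pmf fst P x"
    unfolding push_pmf_def fiber by (simp add: sum.reindex marg_X_def sum_pair_UNIV)
qed

lemma marg_XY1_eq_push_pmf:
  fixes P :: "'x::finite \<times> 'y1::finite \<times> 'y2::finite \<Rightarrow> real"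
  shows "marg_XY1 P = push_pmf xy1_of P"
proof
  fix b :: "'x \<times> 'y1"
  obtain x y where b: "b = (x, y)" by (cases b)
  have fiber: "{a. xy1_of a = (x, y)} = (\<lambda>z. (x, y, z)) ` UNIV" by (auto simp: xy1_of_def image_iff)
  have "inj (\<lambda>z::'y2. (x, y, z))" by (auto simp: inj_on_def)
  then show "marg_XY1 P b = push_pmf xy1_of P b"
    unfolding b push_pmf_def fiber by (simp add: sum.reindex marg_XY1_def)
qed

lemma map_xy1_of: "map xy1_of s = zip (xs_of s) (y1s_of s)"
  by (induction s) (auto simp: xy1_of_def xs_of_def y1s_of_def)

lemma seq_prob_marg_X: "seq_prob P n (\<lambda>s. E (xs_of s)) = seq_prob (marg_X P) n E"
  unfolding marg_X_eq_push_pmf seq_prob_push_pmf[symmetric] xs_of_def ..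

lemma seq_prob_marg_XY1:
  "seq_prob P n (\<lambda>s. E (zip (xs_of s) (y1s_of s))) = seq_prob (marg_XY1 P) n E"
  unfolding marg_XY1_eq_push_pmf seq_prob_push_pmf[symmetric] map_xy1_of ..

lemma marg_XY1_pos: "\<forall>a. 0 < P a \<Longrightarrow> 0 < marg_XY1 P b"
  by (cases b) (auto simp: marg_XY1_def intro!: sum_pos)

lemma marg_X_eq_sum_marg_XY1: "marg_X P x = (\<Sum>y\<in>UNIV. marg_XY1 P (x, y))"
  by (simp add: marg_X_def marg_XY1_def)

lemma marg_XY1_nonneg: "is_pmf P \<Longrightarrow> 0 \<le> marg_XY1 P b"
  by (cases b) (auto simp: marg_XY1_def is_pmf_def intro: sum_nonneg)

lemma marg_XY1_le_marg_X: "is_pmf P \<Longrightarrow> marg_XY1 P (x, y) \<le> marg_X P x"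
  unfolding marg_X_eq_sum_marg_XY1 by (rule member_le_sum) (auto simp: marg_XY1_nonneg)

lemma cond_Y1_X_nonneg: "is_pmf P \<Longrightarrow> 0 \<le> cond_Y1_X P b"
  using marg_XY1_nonneg[of P] marg_XY1_nonneg[of P "(fst b, _)"]
  by (simp add: cond_Y1_X_def marg_X_eq_sum_marg_XY1 sum_nonneg)

lemma cond_Y1_X_pos: "is_pmf P \<Longrightarrow> 0 < marg_XY1 P b \<Longrightarrow> 0 < cond_Y1_X P b"
  using marg_XY1_le_marg_X[of P "fst b" "snd b"] by (simp add: cond_Y1_X_def)

lemma sum_cond_Y1_X_le: "(\<Sum>y\<in>UNIV. cond_Y1_X P (x, y)) \<le> 1"
  by (simp add: cond_Y1_X_def sum_divide_distrib[symmetric] marg_X_eq_sum_marg_XY1[symmetric])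

lemma entropy_pmf_eq_sum: "entropy_pmf p = (\<Sum>x\<in>UNIV. p x * - ln (p x))"
  unfolding entropy_pmf_def by (simp add: sum_negf[symmetric]) (rule sum.cong, auto)

lemma entropy_pmf_nonneg:
  assumes "is_pmf p" shows "0 \<le> entropy_pmf p"
  unfolding entropy_pmf_eq_sum
proof (intro sum_nonneg)
  fix x
  have "0 \<le> p x" and "p x \<le> 1"
    using assms member_le_sum[of x UNIV p] by (auto simp: is_pmf_def)
  then show "0 \<le> p x * - ln (p x)"
    by (cases "p x = 0") (auto intro!: mult_nonneg_nonpos)
qed

lemma cond_entropy_Y1_X_eq_sum:
  "cond_entropy_Y1_X P = (\<Sum>b\<in>UNIV. marg_XY1 P b * - ln (cond_Y1_X P b))"
  unfolding cond_entropy_Y1_X_def cond_Y1_X_def sum_pair_UNIV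
  by (simp add: sum_negf[symmetric]) (intro sum.cong refl, auto)

lemma cond_entropy_Y1_X_nonneg:
  fixes P :: "'x::finite \<times> 'y1::finite \<times> 'y2::finite \<Rightarrow> real"
  assumes "is_pmf P" shows "0 \<le> cond_entropy_Y1_X P"
  unfolding cond_entropy_Y1_X_eq_sum
proof (intro sum_nonneg)
  fix b :: "'x \<times> 'y1"
  show "0 \<le> marg_XY1 P b * - ln (cond_Y1_X P b)"
  proof (cases "marg_XY1 P b = 0")
    case False
    then have "0 < marg_XY1 P b"
      using marg_XY1_nonneg[OF assms, of b] by simp
    moreover have "0 < cond_Y1_X P b"
      using cond_Y1_X_pos[OF assms \<open>0 < marg_XY1 P b\<close>] .
    moreover have "cond_Y1_X P b \<le> 1"
      using marg_XY1_le_marg_X[OF assms, of "fst b" "snd b"] \<open>0 < marg_XY1 P b\<close>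
      by (simp add: cond_Y1_X_def)
    ultimately show ?thesis by (simp add: mult_nonneg_nonpos)
  qed simp
qed

lemma achievability:
  fixes P Pbar :: "'x::finite \<times> 'y1::finite \<times> 'y2::finite \<Rightarrow> real"
  assumes P: "is_pmf P" and Pbar: "is_pmf Pbar" and pos: "\<forall>a. 0 < Pbar a"
    and R1: "entropy_pmf (marg_X P) \<le> R1" and R2: "cond_entropy_Y1_X P \<le> R2"
    and "0 \<le> eps1" "0 \<le> eps2" "0 < \<delta>"
    and "0 \<le> th1" "th1 \<le> max 0 (kl_div (marg_XY1 P) (marg_XY1 Pbar) - \<delta>)"
    and "0 \<le> th2" "th2 \<le> max 0 (kl_div P Pbar - \<delta>)"
  shows "achievable P Pbar R1 R2 eps1 eps2 th1 th2"
proof -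
  define r1 where "r1 n = real n * entropy_pmf (marg_X P) + real n powr (3/4)" for n :: nat
  define r2 where "r2 n = real n * cond_entropy_Y1_X P + real n powr (3/4)" for n :: nat
  define S where "S n = {x. length x = n \<and> exp (- r1 n) \<le> prod_list (map (marg_X P) x)}" for n
  define T
    where "T n x = {y. length y = n \<and> exp (- r2 n) \<le> prod_list (map (cond_Y1_X P) (zip x y))}"
    for n x
  have PX: "is_pmf (marg_X P)" and Q: "is_pmf (marg_XY1 P)" and Qbar: "is_pmf (marg_XY1 Pbar)"
    using P Pbar by (simp_all add: marg_X_eq_push_pmf marg_XY1_eq_push_pmf is_pmf_push_pmf)
  have W: "\<forall>b. 0 \<le> cond_Y1_X P b" "\<forall>x. (\<Sum>y\<in>UNIV. cond_Y1_X P (x, y)) \<le> 1"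
    using cond_Y1_X_nonneg[OF P] sum_cond_Y1_X_le by blast+
  have finS: "finite (S n)" and finT: "finite (T n x)" for n x
    unfolding S_def T_def by (auto intro: finite_subset[OF _ finite_lists_length])
  have cardS: "real (card (S n)) \<le> exp (r1 n)" for n
    unfolding S_def by (rule card_likely_seqs_le[OF PX])
  have cardT: "card (T n x) \<le> nat \<lfloor>exp (r2 n)\<rfloor>" if "x \<in> S n" for n x
    using card_likely_cond_seqs_le[OF W, of x n "r2 n"] that
    unfolding S_def T_def by (simp add: le_nat_floor)
  have miss_S: "seq_prob P n (\<lambda>s. xs_of s \<notin> S n)
      = seq_prob (marg_X P) n (\<lambda>x. prod_list (map (marg_X P) x) < exp (- r1 n))" for n
    by (subst seq_prob_marg_X[symmetric], rule seq_prob_cong) (auto simp: S_def xs_of_def)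
  have miss_T: "seq_prob P n (\<lambda>s. y1s_of s \<notin> T n (xs_of s))
      = seq_prob (marg_XY1 P) n (\<lambda>u. prod_list (map (cond_Y1_X P) u) < exp (- r2 n))" for n
    by (subst seq_prob_marg_XY1[symmetric], rule seq_prob_cong)
      (auto simp: T_def xs_of_def y1s_of_def)
  show ?thesis
  proof (rule achievable_if_likely_sets[OF P Pbar finS finT cardT,
        where ?A1.0 = "stein_region (marg_XY1 P) (marg_XY1 Pbar) \<delta>"
          and ?A2.0 = "stein_region P Pbar \<delta>"
          and ?a1.0 = "kl_div (marg_XY1 P) (marg_XY1 Pbar) - \<delta>" and ?a2.0 = "kl_div P Pbar - \<delta>"])
    show "limsup (\<lambda>n. ereal (ln (real (card (S n) + 1)) / real n)) \<le> ereal R1"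
      using cardS entropy_pmf_nonneg[OF PX] R1 unfolding r1_def by (rule limsup_rate_le)
    show "limsup (\<lambda>n. ereal (ln (real (nat \<lfloor>exp (r2 n)\<rfloor> + 1)) / real n)) \<le> ereal R2"
      using cond_entropy_Y1_X_nonneg[OF P] R2 unfolding r2_def by (intro limsup_rate_le) auto
    show "(\<lambda>n. seq_prob P n (\<lambda>s. xs_of s \<notin> S n)) \<longlonglongrightarrow> 0"
      using seq_prob_unlikely_tendsto_0[OF PX, of "marg_X P"]
      unfolding miss_S r1_def entropy_pmf_eq_sum by simp
    show "(\<lambda>n. seq_prob P n (\<lambda>s. y1s_of s \<notin> T n (xs_of s))) \<longlonglongrightarrow> 0"
      using seq_prob_unlikely_tendsto_0[OF Q, of "cond_Y1_X P"] cond_Y1_X_pos[OF P]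
      unfolding miss_T r2_def cond_entropy_Y1_X_eq_sum by simp
    have "seq_prob P n
          (\<lambda>s. \<not> stein_region (marg_XY1 P) (marg_XY1 Pbar) \<delta> n (zip (xs_of s) (y1s_of s)))
        = seq_prob (marg_XY1 P) n (\<lambda>u. \<not> stein_region (marg_XY1 P) (marg_XY1 Pbar) \<delta> n u)" for n
      by (rule seq_prob_marg_XY1)
    then show "(\<lambda>n. seq_prob P n (\<lambda>s. \<not> stein_region (marg_XY1 P) (marg_XY1 Pbar) \<delta> n
        (zip (xs_of s) (y1s_of s)))) \<longlonglongrightarrow> 0"
      using seq_prob_not_stein_region_tendsto_0[OF Q \<open>0 < \<delta>\<close>] by simp
    show "(\<lambda>n. seq_prob P n (\<lambda>s. \<not> stein_region P Pbar \<delta> n s)) \<longlonglongrightarrow> 0"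
      by (rule seq_prob_not_stein_region_tendsto_0[OF P \<open>0 < \<delta>\<close>])
    show "seq_prob Pbar n
          (\<lambda>s. stein_region (marg_XY1 P) (marg_XY1 Pbar) \<delta> n (zip (xs_of s) (y1s_of s)))
        \<le> exp (- (real n * (kl_div (marg_XY1 P) (marg_XY1 Pbar) - \<delta>)))" for n
      unfolding seq_prob_marg_XY1
      using seq_prob_stein_region_le[OF Q] marg_XY1_pos[OF pos] by blast
    show "seq_prob Pbar n (stein_region P Pbar \<delta> n) \<le> exp (- (real n * (kl_div P Pbar - \<delta>)))" for n
      by (rule seq_prob_stein_region_le[OF P pos])
  qed (use assms in auto)
qed

lemma decision_exponent_le:
  fixes d :: "nat \<Rightarrow> 'a::finite list \<Rightarrow> nat"
  assumes Q: "is_pmf Q" and "\<forall>a. 0 < Qb a" and "eps < 1"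
    and alpha: "limsup (\<lambda>n. ereal (seq_prob Q n (\<lambda>s. d n s \<noteq> 1))) \<le> ereal eps"
    and beta: "ereal th \<le> liminf (\<lambda>n. err_exp n (seq_prob Qb n (\<lambda>s. d n s \<noteq> 2)))"
  shows "th \<le> kl_div Q Qb"
proof -
  have "seq_prob Q n (\<lambda>s. \<not> d n s \<noteq> 2) \<le> seq_prob Q n (\<lambda>s. d n s \<noteq> 1)" for n
    using Q by (intro seq_prob_mono) (auto simp: is_pmf_def)
  then have "limsup (\<lambda>n. ereal (seq_prob Q n (\<lambda>s. \<not> d n s \<noteq> 2))) \<le> ereal eps"
    by (intro order_trans[OF Limsup_mono alpha] always_eventually) simp
  then have "liminf (\<lambda>n. err_exp n (seq_prob Qb n (\<lambda>s. d n s \<noteq> 2))) \<le> ereal (kl_div Q Qb)"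
    by (rule stein_converse[OF Q assms(2,3)])
  then show ?thesis
    using beta by (meson order_trans ereal_less_eq(3))
qed

lemma converse:
  fixes P Pbar :: "'x::finite \<times> 'y1::finite \<times> 'y2::finite \<Rightarrow> real"
  assumes P: "is_pmf P" and pos: "\<forall>a. 0 < Pbar a" and "eps1 < 1" "eps2 < 1"
    and "achievable P Pbar R1 R2 eps1 eps2 th1 th2"
  shows "th1 \<in> {0..kl_div (marg_XY1 P) (marg_XY1 Pbar)}" and "th2 \<in> {0..kl_div P Pbar}"
proof -
  obtain phi1 :: "nat \<Rightarrow> 'x list \<Rightarrow> nat" and phi2 :: "nat \<Rightarrow> nat \<Rightarrow> 'y1 list \<Rightarrow> nat"
    and psi1 :: "nat \<Rightarrow> nat \<Rightarrow> 'y1 list \<Rightarrow> nat" and psi2 :: "nat \<Rightarrow> nat \<Rightarrow> nat \<Rightarrow> 'y2 list \<Rightarrow> nat"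
    where alpha1: "limsup (\<lambda>n. ereal (seq_prob P n (\<lambda>s. dec1 phi1 psi1 n s \<noteq> 1))) \<le> ereal eps1"
    and alpha2: "limsup (\<lambda>n. ereal (seq_prob P n (\<lambda>s. dec2 phi1 phi2 psi2 n s \<noteq> 1))) \<le> ereal eps2"
    and beta1: "ereal th1 \<le> liminf (\<lambda>n. err_exp n (seq_prob Pbar n (\<lambda>s. dec1 phi1 psi1 n s \<noteq> 2)))"
    and beta2:
      "ereal th2 \<le> liminf (\<lambda>n. err_exp n (seq_prob Pbar n (\<lambda>s. dec2 phi1 phi2 psi2 n s \<noteq> 2)))"
    and "0 \<le> th1" "0 \<le> th2"
    using assms(5) unfolding achievable_def by blast
  text \<open>Detector 1 is a test on the \<open>(X, Y\<^sub>1)\<close>-sequence alone.\<close>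
  define d1 where "d1 n u = psi1 n (phi1 n (map fst u)) (map snd u)" for n u
  have dec1_d1:
      "seq_prob R n (\<lambda>s. dec1 phi1 psi1 n s \<noteq> k) = seq_prob (marg_XY1 R) n (\<lambda>u. d1 n u \<noteq> k)"
    for R n k
    unfolding seq_prob_marg_XY1[symmetric]
    by (rule seq_prob_cong) (simp add: d1_def dec1_def xs_of_def y1s_of_def)
  have Q: "is_pmf (marg_XY1 P)"
    using P by (simp add: marg_XY1_eq_push_pmf is_pmf_push_pmf)
  have Qbar: "\<forall>b. 0 < marg_XY1 Pbar b"
    using marg_XY1_pos[OF pos] by blast
  have "th1 \<le> kl_div (marg_XY1 P) (marg_XY1 Pbar)"
    using alpha1 beta1 unfolding dec1_d1 by (rule decision_exponent_le[OF Q Qbar \<open>eps1 < 1\<close>])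
  then show "th1 \<in> {0..kl_div (marg_XY1 P) (marg_XY1 Pbar)}"
    using \<open>0 \<le> th1\<close> by simp
  have "th2 \<le> kl_div P Pbar"
    using alpha2 beta2 by (rule decision_exponent_le[OF P pos \<open>eps2 < 1\<close>])
  then show "th2 \<in> {0..kl_div P Pbar}"
    using \<open>0 \<le> th2\<close> by simp
qed

lemma dist_max_diff_le:
  assumes "0 \<le> a" "0 \<le> b" "0 \<le> \<delta>"
  shows "dist (max 0 (a - \<delta>), max 0 (b - \<delta>)) (a, b) \<le> 2 * \<delta>"
proof -
  have "dist (max 0 (a - \<delta>), max 0 (b - \<delta>)) (a, b) \<le> \<bar>max 0 (a - \<delta>) - a\<bar> + \<bar>max 0 (b - \<delta>) - b\<bar>"
    unfolding dist_Pair_Pair dist_real_def power2_abs by (rule sqrt_sum_squares_le_sum_abs)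
  also have "\<dots> \<le> 2 * \<delta>" using assms by (auto simp: max_def)
  finally show ?thesis .
qed

theorem proposition1:
  fixes P Pbar :: "'x::finite \<times> 'y1::finite \<times> 'y2::finite \<Rightarrow> real"
    and R1 R2 eps1 eps2 :: real
  assumes "is_pmf P" and "is_pmf Pbar"
    and "\<forall>a. 0 < Pbar a"
    and "R1 \<ge> entropy_pmf (marg_X P)"
    and "R2 \<ge> cond_entropy_Y1_X P"
    and "0 < eps1" "eps1 < 1" "0 < eps2" "eps2 < 1"
  shows "exponent_region P Pbar R1 R2 eps1 eps2 =
           {(th1, th2). 0 \<le> th1 \<and> 0 \<le> th2
              \<and> th1 \<le> kl_div (marg_XY1 P) (marg_XY1 Pbar)
              \<and> th2 \<le> kl_div P Pbar}"
proof -
  define D1 where "D1 = kl_div (marg_XY1 P) (marg_XY1 Pbar)"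
  define D2 where "D2 = kl_div P Pbar"
  define A where "A = {(th1, th2). achievable P Pbar R1 R2 eps1 eps2 th1 th2}"
  have "A \<subseteq> {0..D1} \<times> {0..D2}"
    using converse[OF assms(1,3,7,9)] by (auto simp: A_def D1_def D2_def)
  then have "closure A \<subseteq> {0..D1} \<times> {0..D2}"
    by (intro closure_minimal closed_Times closed_atLeastAtMost)
  moreover have "{0..D1} \<times> {0..D2} \<subseteq> closure A"
  proof (clarsimp simp: closure_approachable)
    fix a b e :: real assume ab: "0 \<le> a" "a \<le> D1" "0 \<le> b" "b \<le> D2" and "0 < e"
    have "achievable P Pbar R1 R2 eps1 eps2 (max 0 (a - e / 3)) (max 0 (b - e / 3))"
      using ab \<open>0 < e\<close>
      by (intro achievability[where \<delta> = "e / 3"]) (use assms in \<open>auto simp: D1_def D2_def\<close>)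
    moreover have "dist (max 0 (a - e / 3), max 0 (b - e / 3)) (a, b) < e"
      using dist_max_diff_le[of a b "e / 3"] ab \<open>0 < e\<close> by simp
    ultimately show "\<exists>x\<in>A. dist x (a, b) < e" unfolding A_def by blast
  qed
  ultimately show ?thesis
    unfolding exponent_region_def A_def[symmetric] D1_def[symmetric] D2_def[symmetric] by auto
qed

end
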